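(* In the setting described in the context, for $n\ge1$ let $u_n=\min\{x\in[d,v]: f^{2n}(x)=d\}$; for $n,k\ge1$ let $u'_{n,k}=\max\{x\in[u_{n+1},u_n]: f^{2n+2k}(x)=d\}$; and for $n,k,i\ge1$ let $u_{n,k,i}=\min\{x\in[u'_{n,k},u'_{n,k+1}]: f^{2n+2k+2i}(x)=d\}$ (these sets are nonempty). Then for each $n\ge1$, $k\ge1$, $i\ge1$, on the interval $[u'_{n,k},u_{n,k,i}]$ the map $f$ has no periodic points whose least period is odd and $\le 2n+2k+2i+1$, and no periodic points whose least period is even and $\le 2n+2k+2i$ except points of least period $2n+2k+2i$ and possibly points of least period $2n+2k$ or $2n$.
   Context: Let $I$ be a compact interval and $f:I\to I$ continuous; $f^1=f$, $f^n=f\circ f^{n-1}$. A point $x_0$ is a periodic point of least period $k$ (a period-$k$ point) if $f^k(x_0)=x_0$ and $f^i(x_0)\ne x_0$ for $0<i<k$. Let $m\ge3$ be odd and let $P$ be a periodic orbit of $f$ of least period $m$. Put $e=f^{m-1}(\min P)$. Let $v\in[\min P,e)$ be a point with $f(v)=e$, and let $z\in(v,e)$ be a fixed point of $f$ (such points exist). Define $z_0=\min\{x\in[v,z]: f^2(x)=x\}$ and $d=\max\{x\in[\min P,v]: f^2(x)=z_0\}$ (both sets are nonempty). *)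

theory Defs
  imports "HOL-Analysis.Analysis"
begin

definition least_period_point :: "(real \<Rightarrow> real) \<Rightarrow> nat \<Rightarrow> real \<Rightarrow> bool" where
  "least_period_point f k x \<longleftrightarrow> k > 0 \<and> (f ^^ k) x = x \<and> (\<forall>i. 0 < i \<and> i < k \<longrightarrow> (f ^^ i) x \<noteq> x)"

definition periodic_orbit :: "(real \<Rightarrow> real) \<Rightarrow> nat \<Rightarrow> real set \<Rightarrow> bool" where
  "periodic_orbit f m P \<longleftrightarrow> (\<exists>x0. least_period_point f m x0 \<and> P = (\<lambda>i. (f ^^ i) x0) ` {..<m})"

end

theory Submission
  imports Defs
begin

(* Put g = f o f. The point z0 is the first fixed point of g right of v and d the last g-preimage
   of z0 left of v, so by the intermediate value theorem g < z0 and f >= z0 on (d, z0), while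
   g d = g z0 = z0. A point whose g-orbit stays above d for N steps therefore stays in (d, z0) and
   cannot have an odd period <= 2N + 1, since f throws it above z0.
   The points u_n, u'_{n,k}, u_{n,k,i} are extremal solutions of g^N y = d. If for x strictly
   between u'_{n,k} and u_{n,k,i} some g^t x with t not in {n, n+k, n+k+i} dropped to u_1 or below
   (or to d or below), the intermediate value theorem would give a solution of g^N y = d closer to
   the corresponding endpoint. Thus g^t x > u_1 > x for those t, which excludes the even periods;
   the endpoints themselves are eventually mapped to the fixed point z0, hence are not periodic. *)

lemma IVT_Icc_between:
  fixes h :: "real \<Rightarrow> real"
  assumes "continuous_on {\<alpha>..\<beta>} h" "x \<in> {\<alpha>..\<beta>}" "y \<in> {\<alpha>..\<beta>}" "h x \<le> w" "w \<le> h y"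
  obtains s where "s \<in> {\<alpha>..\<beta>}" "h s = w"
proof -
  have "connected (h ` {\<alpha>..\<beta>})"
    using assms(1) by (rule connected_continuous_image) simp
  then have "{h x..h y} \<subseteq> h ` {\<alpha>..\<beta>}"
    by (rule connected_contains_Icc) (use assms(2,3) in auto)
  with assms(4,5) that show thesis by auto
qed

lemma Least_real_closed:
  fixes Q :: "real \<Rightarrow> bool"
  assumes "closed {x. Q x}" "Q y0" "\<And>x. Q x \<Longrightarrow> \<alpha> \<le> x"
  shows "Q (LEAST x. Q x)" "\<And>y. Q y \<Longrightarrow> (LEAST x. Q x) \<le> y"
proof -
  have bdd: "bdd_below {x. Q x}"
    using assms(3) by (intro bdd_belowI) auto
  have Inf_in: "Inf {x. Q x} \<in> {x. Q x}"
    using assms(1,2) bdd by (intro closed_contains_Inf) auto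
  have Inf_le: "Inf {x. Q x} \<le> y" if "Q y" for y
    using that bdd by (intro cInf_lower) auto
  have "(LEAST x. Q x) = Inf {x. Q x}"
    using Inf_in Inf_le by (intro Least_equality) auto
  with Inf_in Inf_le show "Q (LEAST x. Q x)" "\<And>y. Q y \<Longrightarrow> (LEAST x. Q x) \<le> y"
    by auto
qed

lemma Greatest_real_closed:
  fixes Q :: "real \<Rightarrow> bool"
  assumes "closed {x. Q x}" "Q y0" "\<And>x. Q x \<Longrightarrow> x \<le> \<beta>"
  shows "Q (GREATEST x. Q x)" "\<And>y. Q y \<Longrightarrow> y \<le> (GREATEST x. Q x)"
proof -
  have bdd: "bdd_above {x. Q x}"
    using assms(3) by (intro bdd_aboveI) auto
  have Sup_in: "Sup {x. Q x} \<in> {x. Q x}"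
    using assms(1,2) bdd by (intro closed_contains_Sup) auto
  have le_Sup: "y \<le> Sup {x. Q x}" if "Q y" for y
    using that bdd by (intro cSup_upper) auto
  have "(GREATEST x. Q x) = Sup {x. Q x}"
    using Sup_in le_Sup by (intro Greatest_equality) auto
  with Sup_in le_Sup show "Q (GREATEST x. Q x)" "\<And>y. Q y \<Longrightarrow> y \<le> (GREATEST x. Q x)"
    by auto
qed

lemma Least_level_point:
  fixes h :: "real \<Rightarrow> real"
  assumes "continuous_on {\<alpha>..\<beta>} h" "y0 \<in> {\<alpha>..\<beta>}" "h y0 = c"
  defines "x \<equiv> LEAST x. x \<in> {\<alpha>..\<beta>} \<and> h x = c"
  shows "x \<in> {\<alpha>..\<beta>}" "h x = c" "\<And>y. y \<in> {\<alpha>..\<beta>} \<Longrightarrow> h y = c \<Longrightarrow> x \<le> y"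
proof -
  have closed: "closed {x. x \<in> {\<alpha>..\<beta>} \<and> h x = c}"
    using assms(1) by (intro continuous_closed_preimage_constant) auto
  have y0: "y0 \<in> {\<alpha>..\<beta>} \<and> h y0 = c" using assms(2,3) by simp
  have bound: "\<And>x. x \<in> {\<alpha>..\<beta>} \<and> h x = c \<Longrightarrow> \<alpha> \<le> x" by simp
  note Least = Least_real_closed[OF closed y0 bound, folded x_def]
  show "x \<in> {\<alpha>..\<beta>}" "h x = c" "\<And>y. y \<in> {\<alpha>..\<beta>} \<Longrightarrow> h y = c \<Longrightarrow> x \<le> y"
    using Least by blast+
qed

lemma Greatest_level_point:
  fixes h :: "real \<Rightarrow> real"
  assumes "continuous_on {\<alpha>..\<beta>} h" "y0 \<in> {\<alpha>..\<beta>}" "h y0 = c"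
  defines "x \<equiv> GREATEST x. x \<in> {\<alpha>..\<beta>} \<and> h x = c"
  shows "x \<in> {\<alpha>..\<beta>}" "h x = c" "\<And>y. y \<in> {\<alpha>..\<beta>} \<Longrightarrow> h y = c \<Longrightarrow> y \<le> x"
proof -
  have closed: "closed {x. x \<in> {\<alpha>..\<beta>} \<and> h x = c}"
    using assms(1) by (intro continuous_closed_preimage_constant) auto
  have y0: "y0 \<in> {\<alpha>..\<beta>} \<and> h y0 = c" using assms(2,3) by simp
  have bound: "\<And>x. x \<in> {\<alpha>..\<beta>} \<and> h x = c \<Longrightarrow> x \<le> \<beta>" by simp
  note Greatest = Greatest_real_closed[OF closed y0 bound, folded x_def]
  show "x \<in> {\<alpha>..\<beta>}" "h x = c" "\<And>y. y \<in> {\<alpha>..\<beta>} \<Longrightarrow> h y = c \<Longrightarrow> y \<le> x"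
    using Greatest by blast+
qed

lemma funpow_image_subset: "f ` S \<subseteq> S \<Longrightarrow> (f ^^ n) ` S \<subseteq> S"
  by (induction n) auto

lemma continuous_on_funpow:
  assumes "continuous_on S f" "f ` S \<subseteq> S"
  shows "continuous_on S (f ^^ n)"
proof (induction n)
  case (Suc n)
  have "continuous_on ((f ^^ n) ` S) f"
    using assms funpow_image_subset by (blast intro: continuous_on_subset)
  with Suc show ?case
    using funpow_image_subset[OF assms(2)] by (auto intro: continuous_on_compose2)
qed (simp add: continuous_on_id)

lemma funpow_2_apply: "(f ^^ 2) x = f (f x)"
  by (simp add: numeral_2_eq_2)

lemma funpow_swap_apply: "(f ^^ m) ((f ^^ n) x) = (f ^^ n) ((f ^^ m) x)"
  by (metis add.commute comp_apply funpow_add)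

lemma periodic_orbit_least_period:
  assumes "periodic_orbit f m P" "y \<in> P"
  shows "least_period_point f m y"
proof -
  obtain x0 where x0: "least_period_point f m x0" and P: "P = (\<lambda>i. (f ^^ i) x0) ` {..<m}"
    using assms(1) unfolding periodic_orbit_def by blast
  then have m: "0 < m" "(f ^^ m) x0 = x0" "\<And>j. 0 < j \<Longrightarrow> j < m \<Longrightarrow> (f ^^ j) x0 \<noteq> x0"
    unfolding least_period_point_def by auto
  obtain i where i: "i < m" "y = (f ^^ i) x0" using assms(2) P by auto
  have x0_from_y: "(f ^^ (m - i)) y = x0"
    using i m(2) funpow_add[of "m - i" i f] by simp
  have "(f ^^ m) y = y"
    using i(2) m(2) funpow_swap_apply[where f = f and m = m and n = i and x = x0] by simp
  moreover have "(f ^^ j) y \<noteq> y" if "0 < j" "j < m" for j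
  proof
    assume "(f ^^ j) y = y"
    then have "(f ^^ j) x0 = x0"
      using x0_from_y funpow_swap_apply[where f = f and m = j and n = "m - i" and x = y] by simp
    with m(3) that show False by blast
  qed
  ultimately show ?thesis using m(1) unfolding least_period_point_def by blast
qed

lemma periodic_orbit_closed:
  assumes "periodic_orbit f m P" "y \<in> P"
  shows "f y \<in> P"
proof -
  obtain x0 where x0: "least_period_point f m x0" and P: "P = (\<lambda>i. (f ^^ i) x0) ` {..<m}"
    using assms(1) unfolding periodic_orbit_def by blast
  then have m: "0 < m" "(f ^^ m) x0 = x0" unfolding least_period_point_def by auto
  obtain i where "y = (f ^^ i) x0" using assms(2) P by auto
  then have "f y = (f ^^ (Suc i mod m)) x0" using funpow_mod_eq[OF m(2), of "Suc i"] by simp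
  then show ?thesis using P m(1) by auto
qed

lemma periodic_orbit_finite_nonempty:
  assumes "periodic_orbit f m P" shows "finite P" "P \<noteq> {}"
  using assms unfolding periodic_orbit_def least_period_point_def by auto

locale return_trap =
  fixes g :: "real \<Rightarrow> real" and a b d v z0 :: real
  assumes cont: "continuous_on {a..b} g" and maps: "g ` {a..b} \<subseteq> {a..b}"
    and a_le_d: "a \<le> d" and d_lt_v: "d < v" and v_lt_z0: "v < z0" and z0_le_b: "z0 \<le> b"
    and g_d: "g d = z0" and g_z0: "g z0 = z0" and g_v: "g v \<le> d"
    and g_below_z0: "\<And>y. y \<in> {d<..<z0} \<Longrightarrow> g y < z0"
begin

text \<open>With \<open>g = f ^^ 2\<close> these are the points u_n, u'_{n,k}, u_{n,k,i} of the statement.\<close>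

definition u :: "nat \<Rightarrow> real" where
  "u n = (LEAST x. x \<in> {d..v} \<and> (g ^^ n) x = d)"

definition u' :: "nat \<Rightarrow> nat \<Rightarrow> real" where
  "u' n k = (GREATEST x. x \<in> {u (n + 1)..u n} \<and> (g ^^ (n + k)) x = d)"

definition uu :: "nat \<Rightarrow> nat \<Rightarrow> nat \<Rightarrow> real" where
  "uu n k i = (LEAST x. x \<in> {u' n k..u' n (k + 1)} \<and> (g ^^ (n + k + i)) x = d)"

lemma continuous_on_iter: "{\<alpha>..\<beta>} \<subseteq> {a..b} \<Longrightarrow> continuous_on {\<alpha>..\<beta>} (g ^^ t)"
  using continuous_on_funpow[OF cont maps] by (rule continuous_on_subset)

lemma iter_split: "s \<le> t \<Longrightarrow> (g ^^ t) x = (g ^^ (t - s)) ((g ^^ s) x)"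
  by (metis funpow_add le_add_diff_inverse2 o_apply)

lemma iter_z0: "(g ^^ t) z0 = z0"
  by (induction t) (simp_all add: g_z0)

lemma iter_after_level: "(g ^^ s) y = d \<Longrightarrow> s < t \<Longrightarrow> (g ^^ t) y = z0"
  using iter_split[of "Suc s" t y] by (simp add: g_d iter_z0)

lemma reach_level:
  assumes "{\<alpha>..\<beta>} \<subseteq> {a..b}" "p \<in> {\<alpha>..\<beta>}" "q \<in> {\<alpha>..\<beta>}"
    and "(g ^^ s) p \<le> c" "c \<le> (g ^^ s) q" "(g ^^ j) c = d"
  obtains y where "y \<in> {\<alpha>..\<beta>}" "(g ^^ s) y = c" "(g ^^ (s + j)) y = d"
proof -
  obtain y where y: "y \<in> {\<alpha>..\<beta>}" "(g ^^ s) y = c"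
    using IVT_Icc_between[OF continuous_on_iter[OF assms(1)] assms(2-5)] .
  moreover have "(g ^^ (s + j)) y = d"
    using y assms(6) by (simp add: funpow_add add.commute)
  ultimately show thesis by (rule that)
qed

lemma level_point_exists: "\<exists>x\<in>{d..v}. (g ^^ n) x = d"
proof -
  obtain x1 where x1: "x1 \<in> {d..v}" "(g ^^ 1) x1 = d"
    by (rule IVT_Icc_between[OF continuous_on_iter[of d v 1], of v d d])
      (use a_le_d d_lt_v v_lt_z0 z0_le_b g_v g_d in auto)
  show ?thesis
  proof (induction n)
    case 0
    show ?case using d_lt_v by auto
  next
    case (Suc n)
    then obtain x where x: "x \<in> {d..v}" "(g ^^ n) x = d" by blast
    show ?case
    proof (cases "n = 0")
      case True
      then show ?thesis using x1 by auto
    next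
      case False
      then have "(g ^^ n) d = z0" using iter_after_level[of 0 d n] by simp
      obtain y where "y \<in> {d..x}" "(g ^^ (n + 1)) y = d"
        by (rule reach_level[of d x x d n x1 1])
          (use \<open>(g ^^ n) d = z0\<close> x x1 a_le_d v_lt_z0 z0_le_b in auto)
      then show ?thesis using x by auto
    qed
  qed
qed

lemma u_spec:
  "u n \<in> {d..v}" "(g ^^ n) (u n) = d" "\<And>y. y \<in> {d..v} \<Longrightarrow> (g ^^ n) y = d \<Longrightarrow> u n \<le> y"
proof -
  obtain y0 where "y0 \<in> {d..v}" "(g ^^ n) y0 = d" using level_point_exists by blast
  from Least_level_point[OF continuous_on_iter this]
  show "u n \<in> {d..v}" "(g ^^ n) (u n) = d" "\<And>y. y \<in> {d..v} \<Longrightarrow> (g ^^ n) y = d \<Longrightarrow> u n \<le> y"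
    unfolding u_def using a_le_d v_lt_z0 z0_le_b by auto
qed

lemma d_lt_u: "n \<ge> 1 \<Longrightarrow> d < u n"
  using u_spec(1,2)[of n] iter_after_level[of 0 d n] d_lt_v v_lt_z0
  by (cases "u n = d") auto

lemma u_Suc_le:
  assumes "n \<ge> 1" shows "u (Suc n) \<le> u n"
proof -
  have "(g ^^ n) d = z0" using assms iter_after_level[of 0 d n] by simp
  obtain y where y: "y \<in> {d..u n}" "(g ^^ (n + 1)) y = d"
    by (rule reach_level[of d "u n" "u n" d n "u 1" 1])
      (use \<open>(g ^^ n) d = z0\<close> u_spec[of n] u_spec[of 1] a_le_d v_lt_z0 z0_le_b in auto)
  then have "u (Suc n) \<le> y" using u_spec(1)[of n] u_spec(3)[where n = "Suc n"] by auto
  with y show ?thesis by auto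
qed

lemma u_antimono:
  assumes "1 \<le> s" "s \<le> t" shows "u t \<le> u s"
  using assms(2)
proof (induction t rule: dec_induct)
  case (step n)
  then show ?case using assms(1) u_Suc_le[of n] by simp
qed simp

lemma level_point_above_u1:
  assumes "s \<ge> 1" obtains w where "w \<in> {u 1..z0}" "(g ^^ s) w = d"
proof -
  obtain w where "w \<in> {u 1..z0}" "(g ^^ (1 + (s - 1))) w = d"
    by (rule reach_level[of "u 1" z0 "u 1" z0 1 "u (s - 1)" "s - 1"])
      (use iter_z0[of 1] u_spec[of 1] u_spec[of "s - 1"] a_le_d v_lt_z0 z0_le_b in auto)
  with assms that show thesis by simp
qed

text \<open>As \<open>g ^^ t\<close> sends \<open>p\<close> to \<open>z0\<close>, it attains on \<open>[\<alpha>, \<beta>]\<close> every value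
  between \<open>(g ^^ t) x\<close> and \<open>z0\<close>; one sent to \<open>d\<close> by the remaining \<open>N - t\<close> iterations
  would give a forbidden solution of \<open>(g ^^ N) y = d\<close>.\<close>

lemma iter_stays_above:
  assumes sub: "{\<alpha>..\<beta>} \<subseteq> {a..b}" and p: "p \<in> {\<alpha>..\<beta>}" "(g ^^ t) p = z0"
    and x: "x \<in> {\<alpha>..\<beta>}" and tN: "t \<le> N"
    and no_level: "\<And>y. y \<in> {\<alpha>..\<beta>} \<Longrightarrow> (g ^^ N) y \<noteq> d"
  shows "d < (g ^^ t) x" and "t < N \<Longrightarrow> u 1 < (g ^^ t) x"
proof -
  have miss: False if w: "(g ^^ t) x \<le> w" "w \<le> z0" "(g ^^ (N - t)) w = d" for w
  proof -
    obtain y where "y \<in> {\<alpha>..\<beta>}" "(g ^^ (t + (N - t))) y = d"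
      by (rule reach_level[OF sub x p(1) w(1)]) (use w p(2) in auto)
    with no_level tN show False by fastforce
  qed
  show above_u1: "u 1 < (g ^^ t) x" if tN': "t < N"
  proof (rule ccontr)
    assume "\<not> u 1 < (g ^^ t) x"
    moreover obtain w where "w \<in> {u 1..z0}" "(g ^^ (N - t)) w = d"
      by (rule level_point_above_u1[of "N - t"]) (use tN' in simp)
    ultimately show False using miss[of w] by auto
  qed
  show "d < (g ^^ t) x"
  proof (cases "t < N")
    case True
    then show ?thesis using above_u1 d_lt_u[of 1] by fastforce
  next
    case False
    then show ?thesis using miss[of d] tN d_lt_v v_lt_z0 by fastforce
  qed
qed

lemma u_bounds: "a \<le> u n" "u n \<le> b"
  using u_spec(1)[of n] a_le_d v_lt_z0 z0_le_b by auto

lemma no_level_below_u: "y \<in> {d..<u n} \<Longrightarrow> (g ^^ n) y \<noteq> d"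
  using u_spec(1)[of n] u_spec(3)[where n = n, of y] by auto

lemma u'_spec:
  assumes "n \<ge> 1" "k \<ge> 1"
  shows "u' n k \<in> {u (n + 1)..u n}" "(g ^^ (n + k)) (u' n k) = d"
    "\<And>y. y \<in> {u (n + 1)..u n} \<Longrightarrow> (g ^^ (n + k)) y = d \<Longrightarrow> y \<le> u' n k"
proof -
  have "(g ^^ (n + 1)) (u n) = z0"
    using u_spec(2) by (rule iter_after_level) simp
  obtain y0 where "y0 \<in> {u (n + 1)..u n}" "(g ^^ (n + 1 + (k - 1))) y0 = d"
    by (rule reach_level[of "u (n + 1)" "u n" "u (n + 1)" "u n" "n + 1" "u (k - 1)" "k - 1"])
      (use \<open>(g ^^ (n + 1)) (u n) = z0\<close> u_bounds u_spec[of "n + 1"] u_spec[of "k - 1"]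
        u_Suc_le assms v_lt_z0 in auto)
  moreover have "n + 1 + (k - 1) = n + k" using assms(2) by simp
  ultimately have "y0 \<in> {u (n + 1)..u n}" "(g ^^ (n + k)) y0 = d" by simp_all
  from Greatest_level_point[OF continuous_on_iter this]
  show "u' n k \<in> {u (n + 1)..u n}" "(g ^^ (n + k)) (u' n k) = d"
    "\<And>y. y \<in> {u (n + 1)..u n} \<Longrightarrow> (g ^^ (n + k)) y = d \<Longrightarrow> y \<le> u' n k"
    unfolding u'_def using u_bounds by auto
qed

lemma u'_bounds: "n \<ge> 1 \<Longrightarrow> k \<ge> 1 \<Longrightarrow> a \<le> u' n k"
  using u'_spec(1)[of n k] u_bounds[of "n + 1"] by auto

lemma u'_lt_u: assumes "n \<ge> 1" "k \<ge> 1" shows "u' n k < u n"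
proof -
  have "(g ^^ (n + k)) (u n) = z0"
    using u_spec(2) by (rule iter_after_level) (use assms in simp)
  then show ?thesis
    using u'_spec[OF assms] d_lt_v v_lt_z0 by (cases "u' n k = u n") auto
qed

lemma no_level_right_of_u':
  "n \<ge> 1 \<Longrightarrow> k \<ge> 1 \<Longrightarrow> y \<in> {u' n k<..u n} \<Longrightarrow> (g ^^ (n + k)) y \<noteq> d"
  using u'_spec(1)[of n k] u'_spec(3)[where n = n and k = k, of y] by auto

lemma u'_lt_Suc: assumes "n \<ge> 1" "k \<ge> 1" shows "u' n k < u' n (k + 1)"
proof -
  have "(g ^^ (n + k)) (u n) = z0"
    using u_spec(2) by (rule iter_after_level) (use assms in simp)
  obtain y where y: "y \<in> {u' n k..u n}" "(g ^^ (n + k)) y = u 1" "(g ^^ (n + k + 1)) y = d"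
    by (rule reach_level[of "u' n k" "u n" "u' n k" "u n" "n + k" "u 1" 1])
      (use \<open>(g ^^ (n + k)) (u n) = z0\<close> u_bounds u'_bounds u'_spec[OF assms] u_spec[of 1]
        assms v_lt_z0 in auto)
  have "y \<noteq> u' n k" using y(2) u'_spec(2)[OF assms] d_lt_u[of 1] by auto
  moreover have "y \<le> u' n (k + 1)"
    using y u'_spec(1)[OF assms] u'_spec(3)[of n "k + 1"] assms by auto
  ultimately show ?thesis using y(1) by auto
qed

lemma uu_spec:
  assumes n: "n \<ge> 1" and k: "k \<ge> 1" and i: "i \<ge> 1"
  shows "uu n k i \<in> {u' n k..u' n (k + 1)}" "(g ^^ (n + k + i)) (uu n k i) = d"
    "\<And>y. y \<in> {u' n k..u' n (k + 1)} \<Longrightarrow> (g ^^ (n + k + i)) y = d \<Longrightarrow> uu n k i \<le> y"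
proof -
  define w where "w = (g ^^ (n + k)) (u' n (k + 1))"
  have k1: "k + 1 \<ge> 1" by simp
  have u'_Suc: "u' n (k + 1) \<in> {u' n k<..u n}"
    using u'_lt_Suc[OF n k] u'_spec(1)[OF n k1] by auto
  have "(g ^^ (n + k)) (u n) = z0"
    using u_spec(2) by (rule iter_after_level) (use k in simp)
  have "d < w"
    unfolding w_def
    by (rule iter_stays_above(1)[of "u' n (k + 1)" "u n" "u n" "n + k" "u' n (k + 1)" "n + k"])
      (use \<open>(g ^^ (n + k)) (u n) = z0\<close> u'_Suc u'_bounds[OF n k1] u_bounds
        no_level_right_of_u'[OF n k] in auto)
  moreover have "(g ^^ 1) w = d"
    using u'_spec(2)[OF n k1] by (simp add: w_def)
  ultimately have "u 1 \<le> w"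
    using u_spec(1)[of 1] u_spec(3)[where n = 1, of w] by (cases "w \<le> v") auto
  then have "u i \<le> w" using u_antimono[OF order_refl i] by simp
  obtain y0 where "y0 \<in> {u' n k..u' n (k + 1)}" "(g ^^ (n + k + i)) y0 = d"
    by (rule reach_level[of "u' n k" "u' n (k + 1)" "u' n k" "u' n (k + 1)" "n + k" "u i" i])
      (use \<open>u i \<le> w\<close> w_def u'_Suc u'_bounds[OF n k] u_bounds[of n] u'_spec(2)[OF n k]
        u_spec(1,2)[of i] in auto)
  from Least_level_point[OF continuous_on_iter this]
  show "uu n k i \<in> {u' n k..u' n (k + 1)}" "(g ^^ (n + k + i)) (uu n k i) = d"
    "\<And>y. y \<in> {u' n k..u' n (k + 1)} \<Longrightarrow> (g ^^ (n + k + i)) y = d \<Longrightarrow> uu n k i \<le> y"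
    unfolding uu_def using u'_Suc u'_bounds[OF n k] u_bounds[of n] by auto
qed

lemma no_level_below_uu:
  "n \<ge> 1 \<Longrightarrow> k \<ge> 1 \<Longrightarrow> i \<ge> 1 \<Longrightarrow> y \<in> {u' n k..<uu n k i} \<Longrightarrow> (g ^^ (n + k + i)) y \<noteq> d"
  using uu_spec(1)[of n k i] uu_spec(3)[where n = n and k = k and i = i, of y] by auto

lemma level_point_not_periodic:
  assumes "(g ^^ s) y = d" "0 < q" shows "(g ^^ q) y \<noteq> y"
proof
  assume periodic: "(g ^^ q) y = y"
  have "(g ^^ (q * Suc s)) y = y"
    using funpow_mod_eq[OF periodic, where m = "q * Suc s"] by simp
  moreover have "(g ^^ (q * Suc s)) y = z0"
    by (rule iter_after_level[OF assms(1)]) (use assms(2) mult_le_mono1[of 1 q "Suc s"] in simp)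
  ultimately have "(g ^^ s) z0 = d" using assms(1) by simp
  then show False using iter_z0[of s] d_lt_v v_lt_z0 by simp
qed

lemma orbit_trapped:
  assumes n: "n \<ge> 1" and k: "k \<ge> 1" and i: "i \<ge> 1" and x: "x \<in> {u' n k<..<uu n k i}"
  shows "t \<le> n + k + i \<Longrightarrow> (g ^^ t) x \<in> {d<..<z0}"
    and "1 \<le> t \<Longrightarrow> t \<le> n + k + i \<Longrightarrow> t \<notin> {n, n + k, n + k + i} \<Longrightarrow> x < (g ^^ t) x"
proof -
  have x_lt_u: "x < u n"
    using x uu_spec(1)[OF n k i] u'_lt_u[OF n, of "k + 1"] by auto
  have d_lt_x: "d < x"
    using x u'_spec(1)[OF n k] d_lt_u[of "n + 1"] by auto
  have x_lt_u1: "x < u 1"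
    using x_lt_u u_antimono[OF order_refl n] by simp
  have above: "d < (g ^^ t) x \<and> (t \<notin> {n, n + k, n + k + i} \<longrightarrow> u 1 < (g ^^ t) x)"
    if t: "1 \<le> t" "t \<le> n + k + i" for t
  proof -
    consider "t \<le> n" | "n < t" "t \<le> n + k" | "n + k < t" using t by linarith
    then show ?thesis
    proof cases
      case 1
      have "(g ^^ t) d = z0" using iter_after_level[of 0 d t] t by simp
      then show ?thesis
        using iter_stays_above[of d x d t x n] 1 x_lt_u d_lt_x a_le_d u_bounds[of n]
          no_level_below_u[of _ n] by auto
    next
      case 2
      have "(g ^^ t) (u n) = z0" by (rule iter_after_level[OF u_spec(2)]) (use 2 in simp)
      then show ?thesis
        using iter_stays_above[of x "u n" "u n" t x "n + k"] 2 x x_lt_u d_lt_x a_le_d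
          u_bounds[of n] no_level_right_of_u'[OF n k] by auto
    next
      case 3
      have "(g ^^ t) (u' n k) = z0"
        by (rule iter_after_level[OF u'_spec(2)[OF n k]]) (use 3 in simp)
      then show ?thesis
        using iter_stays_above[of "u' n k" x "u' n k" t x "n + k + i"] 3 t x x_lt_u
          u'_bounds[OF n k] u_bounds[of n] no_level_below_uu[OF n k i] by auto
    qed
  qed
  show "(g ^^ t) x \<in> {d<..<z0}" if "t \<le> n + k + i"
    using that
  proof (induction t)
    case 0
    show ?case using d_lt_x x_lt_u1 u_spec(1)[of 1] v_lt_z0 by simp
  next
    case (Suc t)
    then have "g ((g ^^ t) x) < z0" by (intro g_below_z0) simp
    with above[of "Suc t"] Suc.prems show ?case by simp
  qed
  show "x < (g ^^ t) x" if "1 \<le> t" "t \<le> n + k + i" "t \<notin> {n, n + k, n + k + i}"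
    using above[OF that(1,2)] that(3) x_lt_u1 by auto
qed

end

locale odd_orbit_setting =
  fixes f :: "real \<Rightarrow> real" and a b :: real and m :: nat and P :: "real set" and v z e z0 d :: real
  assumes cont: "continuous_on {a..b} f" and maps: "f ` {a..b} \<subseteq> {a..b}"
    and m3: "m \<ge> 3" and modd: "odd m" and orb: "periodic_orbit f m P" and PI: "P \<subseteq> {a..b}"
    and e_def: "e = (f ^^ (m - 1)) (Min P)"
    and v: "v \<in> {Min P..<e}" and fv: "f v = e" and z: "z \<in> {v<..<e}" and fz: "f z = z"
    and z0_def: "z0 = (LEAST x. x \<in> {v..z} \<and> (f ^^ 2) x = x)"
    and d_def: "d = (GREATEST x. x \<in> {Min P..v} \<and> (f ^^ 2) x = z0)"
begin

lemma continuous_on_f: "{\<alpha>..\<beta>} \<subseteq> {a..b} \<Longrightarrow> continuous_on {\<alpha>..\<beta>} f"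
  using cont by (rule continuous_on_subset)

lemma continuous_on_ff: "{\<alpha>..\<beta>} \<subseteq> {a..b} \<Longrightarrow> continuous_on {\<alpha>..\<beta>} (\<lambda>x. f (f x))"
  using continuous_on_funpow[OF cont maps, of 2]
  by (simp add: numeral_2_eq_2 continuous_on_subset)

lemma Min_P: "Min P \<in> P" "\<And>y. y \<in> P \<Longrightarrow> Min P \<le> y"
  using periodic_orbit_finite_nonempty[OF orb] by auto

lemma f_e: "f e = Min P"
proof -
  have "(f ^^ m) (Min P) = Min P"
    using periodic_orbit_least_period[OF orb Min_P(1)] unfolding least_period_point_def by blast
  moreover have "f e = (f ^^ Suc (m - 1)) (Min P)" using e_def by simp
  ultimately show ?thesis using m3 by simp
qed

lemma ff_v: "f (f v) = Min P"
  using fv f_e by simp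

lemma Min_P_lt_v: "Min P < v"
proof -
  have "(f ^^ 2) (Min P) \<noteq> Min P"
    using periodic_orbit_least_period[OF orb Min_P(1)] m3 unfolding least_period_point_def by simp
  then have "v \<noteq> Min P" using ff_v by (auto simp: numeral_2_eq_2)
  with v show ?thesis by simp
qed

lemma bounds: "a \<le> Min P" "e \<le> b"
proof -
  have "Min P \<in> {a..b}" using Min_P(1) PI by auto
  moreover have "e \<in> {a..b}"
    using calculation funpow_image_subset[OF maps, of "m - 1"] e_def
    by (auto simp: image_subset_iff)
  ultimately show "a \<le> Min P" "e \<le> b" by auto
qed

lemma z0_spec: "z0 \<in> {v..z}" "f (f z0) = z0" "\<And>y. y \<in> {v..z} \<Longrightarrow> f (f y) = y \<Longrightarrow> z0 \<le> y"
proof -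
  have "z0 = (LEAST x. x \<in> {v..z} \<and> f (f x) - x = 0)"
    using z0_def by (simp add: numeral_2_eq_2)
  moreover have "continuous_on {v..z} (\<lambda>x. f (f x) - x)"
    using continuous_on_ff[of v z] v z bounds by (intro continuous_intros) auto
  moreover have "z \<in> {v..z}" "f (f z) - z = 0" using z fz by auto
  ultimately show "z0 \<in> {v..z}" "f (f z0) = z0" "\<And>y. y \<in> {v..z} \<Longrightarrow> f (f y) = y \<Longrightarrow> z0 \<le> y"
    using Least_level_point[of v z "\<lambda>x. f (f x) - x" z 0] by auto
qed

lemma v_lt_z0: "v < z0"
  using z0_spec(1,2) ff_v Min_P_lt_v by (cases "z0 = v") auto

lemma ff_below_diagonal: "y \<in> {v..<z0} \<Longrightarrow> f (f y) < y"
proof (rule ccontr)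
  assume y: "y \<in> {v..<z0}" and "\<not> f (f y) < y"
  moreover have "continuous_on {v..y} (\<lambda>x. f (f x) - x)"
    using continuous_on_ff[of v y] y z0_spec(1) z v bounds by (intro continuous_intros) auto
  ultimately obtain s where "s \<in> {v..y}" "f (f s) - s = 0"
    using IVT_Icc_between[where h = "\<lambda>x. f (f x) - x" and x = v and y = y and w = 0]
      ff_v Min_P_lt_v by auto
  then show False using y z0_spec(1) z0_spec(3)[of s] by auto
qed

lemma f_above_diagonal: "y \<in> {v..<z0} \<Longrightarrow> y < f y"
proof (rule ccontr)
  assume y: "y \<in> {v..<z0}" and "\<not> y < f y"
  moreover have "continuous_on {v..y} (\<lambda>x. f x - x)"
    using continuous_on_f[of v y] y z0_spec(1) z v bounds by (intro continuous_intros) auto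
  ultimately obtain s where "s \<in> {v..y}" "f s - s = 0"
    using IVT_Icc_between[where h = "\<lambda>x. f x - x" and x = y and y = v and w = 0] fv v by auto
  then show False using y z0_spec(1) z0_spec(3)[of s] by auto
qed

lemma f_above_z0_right: "y \<in> {v..<z0} \<Longrightarrow> z0 \<le> f y"
  using f_above_diagonal[of y] f_above_diagonal[of "f y"] ff_below_diagonal[of y] by force

lemma ff_hits_z0_left: "\<exists>x\<in>{Min P..v}. f (f x) = z0"
proof (rule ccontr)
  assume none: "\<not> ?thesis"
  have below: "f (f y) < z0" if y: "y \<in> {Min P..<z0}" for y
  proof (cases "y \<le> v")
    case True
    show ?thesis
    proof (rule ccontr)
      assume "\<not> f (f y) < z0"
      moreover have "continuous_on {y..v} (\<lambda>x. f (f x))"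
        using continuous_on_ff[of y v] y bounds v by auto
      ultimately obtain s where "s \<in> {y..v}" "f (f s) = z0"
        using IVT_Icc_between[where h = "\<lambda>x. f (f x)" and x = v and y = y and w = z0]
          True ff_v Min_P_lt_v v_lt_z0 by auto
      with none y show False by auto
    qed
  next
    case False
    then show ?thesis using ff_below_diagonal[of y] y by auto
  qed
  have orbit: "((\<lambda>x. f (f x)) ^^ j) (Min P) \<in> P \<and> ((\<lambda>x. f (f x)) ^^ j) (Min P) < z0" for j
  proof (induction j)
    case 0
    show ?case using Min_P(1) Min_P_lt_v v_lt_z0 by simp
  next
    case (Suc j)
    then have "f (f (((\<lambda>x. f (f x)) ^^ j) (Min P))) \<in> P"
      using periodic_orbit_closed[OF orb] by blast
    moreover have "f (f (((\<lambda>x. f (f x)) ^^ j) (Min P))) < z0"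
      using Suc Min_P(2) by (intro below) auto
    ultimately show ?case by simp
  qed
  have "2 * ((m - 1) div 2) = m - 1" using modd by simp
  then have "e = ((f ^^ 2) ^^ ((m - 1) div 2)) (Min P)" using e_def by (simp add: funpow_mult)
  moreover have "f ^^ 2 = (\<lambda>x. f (f x))" by (simp add: fun_eq_iff funpow_2_apply)
  ultimately have "e = ((\<lambda>x. f (f x)) ^^ ((m - 1) div 2)) (Min P)" by simp
  with orbit[of "(m - 1) div 2"] z0_spec(1) z show False by auto
qed

lemma d_spec: "d \<in> {Min P..v}" "f (f d) = z0" "\<And>y. y \<in> {Min P..v} \<Longrightarrow> f (f y) = z0 \<Longrightarrow> y \<le> d"
proof -
  have "d = (GREATEST x. x \<in> {Min P..v} \<and> f (f x) = z0)"
    using d_def by (simp add: numeral_2_eq_2)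
  moreover obtain y0 where "y0 \<in> {Min P..v}" "f (f y0) = z0" using ff_hits_z0_left by blast
  moreover have "continuous_on {Min P..v} (\<lambda>x. f (f x))"
    using continuous_on_ff bounds v by auto
  ultimately show "d \<in> {Min P..v}" "f (f d) = z0" "\<And>y. y \<in> {Min P..v} \<Longrightarrow> f (f y) = z0 \<Longrightarrow> y \<le> d"
    using Greatest_level_point[of "Min P" v "\<lambda>x. f (f x)" y0 z0] by auto
qed

lemma d_lt_v: "d < v"
  using d_spec(1,2) ff_v Min_P_lt_v v_lt_z0 by (cases "d = v") auto

lemma ff_below_z0_left: "y \<in> {d<..v} \<Longrightarrow> f (f y) < z0"
proof (rule ccontr)
  assume y: "y \<in> {d<..v}" and "\<not> f (f y) < z0"
  moreover have "continuous_on {y..v} (\<lambda>x. f (f x))"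
    using continuous_on_ff[of y v] y d_spec(1) bounds v by auto
  ultimately obtain s where "s \<in> {y..v}" "f (f s) = z0"
    using IVT_Icc_between[where h = "\<lambda>x. f (f x)" and x = v and y = y and w = z0]
      ff_v Min_P_lt_v v_lt_z0 by auto
  then show False using y d_spec(1) d_spec(3)[of s] by auto
qed

lemma f_above_z0_left: "y \<in> {d<..v} \<Longrightarrow> z0 \<le> f y"
proof (rule ccontr)
  assume y: "y \<in> {d<..v}" and below: "\<not> z0 \<le> f y"
  show False
  proof (cases "v \<le> f y")
    case True
    then have "z0 \<le> f (f y)" using below by (intro f_above_z0_right) auto
    with ff_below_z0_left[OF y] show False by simp
  next
    case False
    moreover have "continuous_on {y..v} f"
      using continuous_on_f[of y v] y d_spec(1) bounds v by auto
    ultimately obtain s where s: "s \<in> {y..v}" "f s = v"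
      using IVT_Icc_between[where h = f and x = y and y = v and w = v] fv v y by auto
    then have "f (f s) = e" using fv by simp
    then show False using ff_below_z0_left[of s] s y z0_spec(1) z by auto
  qed
qed

lemma ff_below_z0: "y \<in> {d<..<z0} \<Longrightarrow> f (f y) < z0"
  using ff_below_z0_left[of y] ff_below_diagonal[of y] by (cases "y \<le> v") auto

lemma f_above_z0: "y \<in> {d<..<z0} \<Longrightarrow> z0 \<le> f y"
  using f_above_z0_left[of y] f_above_z0_right[of y] by (cases "y \<le> v") auto

end

sublocale odd_orbit_setting \<subseteq> return_trap "f ^^ 2" a b d v z0
proof
  show "continuous_on {a..b} (f ^^ 2)" using continuous_on_funpow[OF cont maps] .
  show "(f ^^ 2) ` {a..b} \<subseteq> {a..b}" using funpow_image_subset[OF maps] .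
  show "a \<le> d" "d < v" "v < z0" "z0 \<le> b"
    using bounds d_spec(1) d_lt_v v_lt_z0 z0_spec(1) z by auto
  show "(f ^^ 2) d = z0" "(f ^^ 2) z0 = z0" "(f ^^ 2) v \<le> d"
    using d_spec(1,2) z0_spec(2) ff_v by (auto simp: numeral_2_eq_2)
  show "\<And>y. y \<in> {d<..<z0} \<Longrightarrow> (f ^^ 2) y < z0"
    using ff_below_z0 by (simp add: numeral_2_eq_2)
qed

context odd_orbit_setting
begin

lemma least_period_on_uu_interval:
  assumes n: "n \<ge> 1" and k: "k \<ge> 1" and i: "i \<ge> 1" and x: "x \<in> {u' n k..uu n k i}"
    and p: "least_period_point f p x"
  shows "(odd p \<longrightarrow> p > 2 * n + 2 * k + 2 * i + 1) \<and>
    (even p \<and> p \<le> 2 * n + 2 * k + 2 * i \<longrightarrow> p \<in> {2 * n + 2 * k + 2 * i, 2 * n + 2 * k, 2 * n})"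
proof -
  have p0: "0 < p" and fp: "(f ^^ p) x = x" using p unfolding least_period_point_def by auto
  have gp: "((f ^^ 2) ^^ p) x = x"
    using funpow_mod_eq[OF fp, where m = "2 * p"] by (simp add: funpow_mult)
  have "x \<noteq> u' n k" "x \<noteq> uu n k i"
    using level_point_not_periodic[OF u'_spec(2)[OF n k] p0]
      level_point_not_periodic[OF uu_spec(2)[OF n k i] p0] gp by auto
  then have x_open: "x \<in> {u' n k<..<uu n k i}" using x by auto
  have "p > 2 * n + 2 * k + 2 * i + 1" if "odd p"
  proof (rule ccontr)
    assume "\<not> ?thesis"
    moreover obtain s where s: "p = 2 * s + 1" using \<open>odd p\<close> oddE by blast
    ultimately have "s \<le> n + k + i" by simp
    then have "z0 \<le> f (((f ^^ 2) ^^ s) x)"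
      using orbit_trapped(1)[OF n k i x_open] by (intro f_above_z0) simp
    moreover have "f (((f ^^ 2) ^^ s) x) = x"
      using fp s by (simp add: funpow_mult)
    ultimately show False using orbit_trapped(1)[OF n k i x_open, of 0] by simp
  qed
  moreover have "p \<in> {2 * n + 2 * k + 2 * i, 2 * n + 2 * k, 2 * n}"
    if "even p" "p \<le> 2 * n + 2 * k + 2 * i"
  proof -
    obtain q where q: "p = 2 * q" using \<open>even p\<close> by blast
    then have "((f ^^ 2) ^^ q) x = x" "1 \<le> q" "q \<le> n + k + i"
      using fp p0 that(2) by (simp_all add: funpow_mult)
    then have "q \<in> {n, n + k, n + k + i}"
      using orbit_trapped(2)[OF n k i x_open, of q] by fastforce
    then show ?thesis using q by auto
  qed
  ultimately show ?thesis by blast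
qed

end

theorem lemma12:
  fixes f :: "real \<Rightarrow> real" and a b :: real and m :: nat and P :: "real set"
    and v z :: real
  assumes ab: "a \<le> b"
    and cont: "continuous_on {a..b} f"
    and maps: "f ` {a..b} \<subseteq> {a..b}"
    and m3: "m \<ge> 3" and modd: "odd m"
    and orb: "periodic_orbit f m P" and PI: "P \<subseteq> {a..b}"
  defines "e \<equiv> (f ^^ (m - 1)) (Min P)"
  assumes v: "v \<in> {Min P..<e}" and fv: "f v = e"
    and z: "z \<in> {v<..<e}" and fz: "f z = z"
  defines "z0 \<equiv> LEAST x. x \<in> {v..z} \<and> (f ^^ 2) x = x"
  defines "d \<equiv> GREATEST x. x \<in> {Min P..v} \<and> (f ^^ 2) x = z0"
  defines "u \<equiv> (\<lambda>n::nat. LEAST x. x \<in> {d..v} \<and> (f ^^ (2 * n)) x = d)"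
  defines "u' \<equiv> (\<lambda>n k::nat. GREATEST x. x \<in> {u (n + 1)..u n} \<and> (f ^^ (2 * n + 2 * k)) x = d)"
  defines "uu \<equiv> (\<lambda>n k i::nat. LEAST x. x \<in> {u' n k..u' n (k + 1)} \<and>
                                   (f ^^ (2 * n + 2 * k + 2 * i)) x = d)"
  shows "\<forall>n k i p x. n \<ge> 1 \<and> k \<ge> 1 \<and> i \<ge> 1 \<and> x \<in> {u' n k..uu n k i} \<and> least_period_point f p x \<longrightarrow>
           (odd p \<longrightarrow> p > 2 * n + 2 * k + 2 * i + 1) \<and>
           (even p \<and> p \<le> 2 * n + 2 * k + 2 * i \<longrightarrow>
              p \<in> {2 * n + 2 * k + 2 * i, 2 * n + 2 * k, 2 * n})"
proof -
  interpret O: odd_orbit_setting f a b m P v z e z0 d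
    by unfold_locales (use assms in \<open>simp_all add: e_def z0_def d_def\<close>)
  have "u = O.u"
    by (simp add: fun_eq_iff u_def O.u_def funpow_mult)
  then have "u' = O.u'"
    by (simp add: fun_eq_iff u'_def O.u'_def funpow_mult distrib_left)
  then have "uu = O.uu"
    by (simp add: fun_eq_iff uu_def O.uu_def funpow_mult distrib_left)
  with \<open>u' = O.u'\<close> show ?thesis
    using O.least_period_on_uu_interval by blast
qed

end
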